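(* Let $\ell$ be a positive integer, and let $P_\ell$ be the set of all polynomials of length $\ell$ (degree $\ell-1$) in $\mathbb{C}[z]$ with nonzero constant coefficient. Define maps $n,h,r:P_\ell\to P_\ell$ by $n(f)=-f$, $h(f)=\widetilde{f}$, $r(f)=f^\dagger$. These generate a group $G_\ell=\langle n,h,r\rangle$ of permutations of $P_\ell$, and: \begin{enumerate} \item If $\ell=1$, then $G_1$ is the internal direct product of the two cyclic groups $\langle n\rangle$ and $\langle r\rangle$, each of order $2$. \item If $\ell$ is odd with $\ell>1$, then $G_\ell$ is the internal direct product of the three cyclic groups $\langle n\rangle$, $\langle h\rangle$, $\langle r\rangle$, each of order $2$. \item If $\ell$ is even, then $G_\ell$ is isomorphic to the dihedral group of order $8$ generated by $rh$ and $h$, where $rh$ has order $4$, $h$ has order $2$, and $h(rh)h^{-1}=(rh)^{-1}$. \end{enumerate} Moreover, for any $t\in G_\ell$, any $f\in P_\ell$ and any real $p\ge1$, \[ \|t(f)\|_p=\|f\|_p\quad\text{and}\quad \|t(f)\,\widetilde{t(f)}\|_p=\|f\widetilde{f}\|_p. \]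
   Context: For a polynomial $a(z)=a_0+\cdots+a_dz^d$ of degree $d$, its length is $1+d$ and $a^\dagger(z)=\overline{a_d}+\overline{a_{d-1}}z+\cdots+\overline{a_0}z^d$ (conjugate reciprocal). For a (Laurent) polynomial $a$, $\widetilde{a}(z)=a(-z)$ and $\|a\|_p=\left(\frac{1}{2\pi}\int_0^{2\pi}|a(e^{i\theta})|^pd\theta\right)^{1/p}$. *)

theory Defs
  imports "HOL-Algebra.Generated_Groups" "HOL-Algebra.Bij" "HOL-Algebra.Coset" "HOL-Algebra.Multiplicative_Group"
          "HOL-Computational_Algebra.Polynomial" "HOL-Analysis.Analysis"
begin

definition Pl :: "nat \<Rightarrow> complex poly set" where
  "Pl l = {f. degree f = l - 1 \<and> coeff f 0 \<noteq> 0}"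

definition tilde :: "complex poly \<Rightarrow> complex poly" where
  "tilde a = pcompose a [:0, -1:]"

definition dagger :: "complex poly \<Rightarrow> complex poly" where
  "dagger a = map_poly cnj (reflect_poly a)"

definition lp_norm :: "real \<Rightarrow> complex poly \<Rightarrow> real" where
  "lp_norm p a = ((1 / (2 * pi)) * integral {0..2*pi} (\<lambda>\<theta>. cmod (poly a (cis \<theta>)) powr p)) powr (1 / p)"

text \<open>The maps n, h, r as permutations of P_l (extensional, as elements of BijGroup).\<close>
definition n_map :: "nat \<Rightarrow> complex poly \<Rightarrow> complex poly" where
  "n_map l = restrict (\<lambda>f. - f) (Pl l)"

definition h_map :: "nat \<Rightarrow> complex poly \<Rightarrow> complex poly" where
  "h_map l = restrict tilde (Pl l)"

definition r_map :: "nat \<Rightarrow> complex poly \<Rightarrow> complex poly" where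
  "r_map l = restrict dagger (Pl l)"

definition G_grp :: "nat \<Rightarrow> (complex poly \<Rightarrow> complex poly) monoid" where
  "G_grp l = subgroup_generated (BijGroup (Pl l)) {n_map l, h_map l, r_map l}"

definition subgroups_prod :: "('a, 'b) monoid_scheme \<Rightarrow> 'a set list \<Rightarrow> 'a set" where
  "subgroups_prod G Hs = foldr (\<lambda>H A. H <#>\<^bsub>G\<^esub> A) Hs {\<one>\<^bsub>G\<^esub>}"

definition internal_direct_product :: "('a, 'b) monoid_scheme \<Rightarrow> 'a set list \<Rightarrow> bool" where
  "internal_direct_product G Hs \<longleftrightarrow>
     (\<forall>H \<in> set Hs. H \<lhd> G) \<and>
     subgroups_prod G Hs = carrier G \<and>
     (\<forall>i < length Hs. Hs ! i \<inter> subgroups_prod G (take i Hs @ drop (Suc i) Hs) = {\<one>\<^bsub>G\<^esub>})"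

definition d8_mult :: "int \<times> int \<Rightarrow> int \<times> int \<Rightarrow> int \<times> int" where
  "d8_mult x y = ((fst x + (-1) ^ nat (snd x) * fst y) mod 4, (snd x + snd y) mod 2)"

definition dihedral8 :: "(int \<times> int) monoid" where
  "dihedral8 = \<lparr>carrier = {0..3} \<times> {0..1}, monoid.mult = d8_mult, one = (0, 0)\<rparr>"

end

theory Submission
  imports Defs
begin

text \<open>
  The maps n, h and r are involutions and n is central. Comparing coefficients of a polynomial
  of degree \<open>\<ell> - 1\<close> gives the only further relation, \<open>h r = n^(\<ell>-1) r h\<close>. For odd \<open>\<ell>\<close> the
  group is therefore elementary abelian (h is trivial when \<open>\<ell> = 1\<close>); for even \<open>\<ell>\<close> the element
  \<open>x = r h\<close> satisfies \<open>x x = n\<close> and \<open>h x h = x^(-1)\<close>, the presentation of the dihedral group of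
  order 8. That the resulting elements are distinct is seen by applying them to explicit
  polynomials. The norm identities need only be checked on the generators: on the unit circle
  \<open>|f\<^sup>\<dagger>| = |f|\<close>, and \<open>f(-z)\<close> is f rotated by \<open>\<pi>\<close>, which leaves the integral of a
  \<open>2\<pi>\<close>-periodic function unchanged.
\<close>

lemma coeff_tilde: "coeff (tilde f) k = (-1) ^ k * coeff f k"
  unfolding tilde_def by (simp add: coeff_pcompose_linear)

lemma degree_tilde [simp]: "degree (tilde f) = degree f"
  unfolding tilde_def by (simp add: degree_pcompose)

lemma tilde_tilde [simp]: "tilde (tilde f) = f"
  by (rule poly_eqI) (simp add: coeff_tilde)

lemma tilde_minus: "tilde (- f) = - tilde f"
  by (rule poly_eqI) (simp add: coeff_tilde)

lemma poly_tilde: "poly (tilde f) z = poly f (- z)"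
  unfolding tilde_def by (simp add: poly_pcompose)

lemma coeff_dagger:
  "coeff (dagger f) k = (if k > degree f then 0 else cnj (coeff f (degree f - k)))"
  unfolding dagger_def by (simp add: coeff_map_poly coeff_reflect_poly)

lemma coeff_0_dagger [simp]: "coeff (dagger f) 0 = cnj (lead_coeff f)"
  by (simp add: coeff_dagger)

lemma degree_dagger [simp]: "coeff f 0 \<noteq> 0 \<Longrightarrow> degree (dagger f) = degree f"
  unfolding dagger_def by (subst degree_map_poly) auto

lemma dagger_dagger [simp]: "coeff f 0 \<noteq> 0 \<Longrightarrow> dagger (dagger f) = f"
  by (rule poly_eqI) (auto simp: coeff_dagger coeff_eq_0)

lemma dagger_minus: "dagger (- f) = - dagger f"
  by (rule poly_eqI) (simp add: coeff_dagger)

lemma tilde_dagger: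
  assumes "coeff f 0 \<noteq> 0"
  shows "tilde (dagger f) = smult ((-1) ^ degree f) (dagger (tilde f))"
proof (rule poly_eqI)
  fix k
  have "(-1) ^ degree f * (-1) ^ (degree f - k) = (-1::complex) ^ k" if "k \<le> degree f"
    using that by (simp add: minus_one_power_iff)
  then show "coeff (tilde (dagger f)) k = coeff (smult ((-1) ^ degree f) (dagger (tilde f))) k"
    using assms by (auto simp: coeff_tilde coeff_dagger)
qed

lemma cmod_poly_dagger:
  assumes "cmod z = 1"
  shows "cmod (poly (dagger f) z) = cmod (poly f z)"
proof -
  have "z \<noteq> 0"
    using assms by auto
  have "cnj z * z = 1"
    using assms complex_norm_square[of z] by (simp add: mult.commute)
  then have "inverse (cnj z) = z"
    by (rule inverse_unique)
  then have "poly (dagger f) z = cnj (cnj z ^ degree f * poly f z)"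
    unfolding dagger_def using \<open>z \<noteq> 0\<close> poly_reflect_poly_nz[of "cnj z" f] by simp
  then show ?thesis
    using assms by (simp add: norm_mult norm_power)
qed

lemma Pl_iff: "f \<in> Pl l \<longleftrightarrow> degree f = l - 1 \<and> coeff f 0 \<noteq> 0"
  by (simp add: Pl_def)

lemma Pl_coeff_0: "f \<in> Pl l \<Longrightarrow> coeff f 0 \<noteq> 0"
  by (simp add: Pl_iff)

lemma Pl_minus [simp]: "f \<in> Pl l \<Longrightarrow> - f \<in> Pl l"
  by (simp add: Pl_iff)

lemma Pl_tilde [simp]: "f \<in> Pl l \<Longrightarrow> tilde f \<in> Pl l"
  by (simp add: Pl_iff coeff_tilde)

lemma Pl_dagger [simp]: "f \<in> Pl l \<Longrightarrow> dagger f \<in> Pl l"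
  using leading_coeff_0_iff[of f] by (auto simp: Pl_iff)

section \<open>Invariance of the norms\<close>

lemma lp_norm_cong:
  "(\<And>\<theta>. cmod (poly a (cis \<theta>)) = cmod (poly b (cis \<theta>))) \<Longrightarrow> lp_norm p a = lp_norm p b"
  unfolding lp_norm_def by simp

lemma integral_periodic_shift:
  fixes g :: "real \<Rightarrow> real"
  assumes "continuous_on UNIV g" and periodic: "\<And>x. g (x + T) = g x" and "0 \<le> c" "c \<le> T"
  shows "integral {0..T} (\<lambda>x. g (x + c)) = integral {0..T} g"
proof -
  have int: "g integrable_on {a..b}" for a b
    using assms(1) continuous_on_subset integrable_continuous_real by blast
  have "integral {0..T} (\<lambda>x. g (x + c)) = integral {c..T + c} g"
    using integral_shift_real_ivl[of c c "T + c" g] by simp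
  also have "\<dots> = integral {c..T} g + integral {T..T + c} g"
    using assms int by (intro Henstock_Kurzweil_Integration.integral_combine [symmetric]) auto
  also have "integral {T..T + c} g = integral {0..c} g"
    using integral_shift_real_ivl[of T T "T + c" g] periodic by simp
  also have "integral {c..T} g + integral {0..c} g = integral {0..T} g"
    using assms int by (subst add.commute, intro Henstock_Kurzweil_Integration.integral_combine) auto
  finally show ?thesis .
qed

lemma lp_norm_tilde:
  assumes "p > 0"
  shows "lp_norm p (tilde f) = lp_norm p f"
proof -
  define g where "g \<theta> = cmod (poly f (cis \<theta>)) powr p" for \<theta>
  have "continuous_on UNIV g"
    unfolding g_def by (intro continuous_on_powr' continuous_intros) (use assms in auto)
  moreover have "g (x + 2 * pi) = g x" for x
    unfolding g_def by (simp add: cis_mult [symmetric])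
  ultimately have shift: "integral {0..2 * pi} (\<lambda>\<theta>. g (\<theta> + pi)) = integral {0..2 * pi} g"
    by (intro integral_periodic_shift) auto
  then have "integral {0..2 * pi} (\<lambda>\<theta>. cmod (poly (tilde f) (cis \<theta>)) powr p) = integral {0..2 * pi} g"
    unfolding g_def by (simp add: poly_tilde cis_mult [symmetric])
  then show ?thesis
    unfolding lp_norm_def g_def by simp
qed

lemma lp_norm_minus: "lp_norm p (- f) = lp_norm p f"
  by (rule lp_norm_cong) simp

lemma lp_norm_dagger: "lp_norm p (dagger f) = lp_norm p f"
  by (rule lp_norm_cong) (simp add: cmod_poly_dagger)

lemma lp_norm_dagger_mult_tilde:
  "lp_norm p (dagger f * tilde (dagger f)) = lp_norm p (f * tilde f)"
  by (rule lp_norm_cong) (simp add: poly_tilde norm_mult cmod_poly_dagger)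

lemma (in group) generate_involutions_subset:
  assumes "S \<subseteq> carrier G" and invol: "\<And>s. s \<in> S \<Longrightarrow> s \<otimes> s = \<one>"
    and "\<one> \<in> T" "S \<subseteq> T" and closed: "\<And>u v. u \<in> T \<Longrightarrow> v \<in> T \<Longrightarrow> u \<otimes> v \<in> T"
  shows "generate G S \<subseteq> T"
proof
  fix g assume "g \<in> generate G S"
  then show "g \<in> T"
  proof induction
    case (inv s)
    then have "inv s = s"
      using assms(1) invol by (intro inv_equality) auto
    with inv show ?case
      using assms(4) by auto
  qed (use assms in auto)
qed

lemma (in group) generate_commutes:
  assumes "S \<subseteq> carrier G" "y \<in> carrier G" and comm: "\<And>s. s \<in> S \<Longrightarrow> s \<otimes> y = y \<otimes> s"
    and "g \<in> generate G S"
  shows "g \<otimes> y = y \<otimes> g"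
  using assms(4)
proof induction
  case (inv s)
  then have s: "s \<in> carrier G" using assms(1) by auto
  have "inv s \<otimes> y = inv s \<otimes> (y \<otimes> s) \<otimes> inv s"
    using s assms(2) by (simp add: m_assoc)
  also have "\<dots> = inv s \<otimes> (s \<otimes> y) \<otimes> inv s"
    using comm[OF inv] by simp
  also have "\<dots> = y \<otimes> inv s"
    using s assms(2) by (simp flip: m_assoc)
  finally show ?case .
next
  case (eng g g')
  have "g \<in> carrier G" "g' \<in> carrier G"
    using eng.hyps assms(1) generate_in_carrier by auto
  then show ?case
    using eng.IH assms(2) by (metis m_assoc)
qed (use assms in auto)

lemma (in group) comm_group_if_generators_commute:
  assumes gen: "carrier G = generate G S" and S: "S \<subseteq> carrier G"
    and comm: "\<And>s t. s \<in> S \<Longrightarrow> t \<in> S \<Longrightarrow> s \<otimes> t = t \<otimes> s"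
  shows "comm_group G"
proof (rule group_comm_groupI)
  fix x y assume x: "x \<in> carrier G" and y: "y \<in> carrier G"
  have "y \<otimes> s = s \<otimes> y" if "s \<in> S" for s
    using that S comm y gen by (intro generate_commutes[of S s y]) auto
  then show "x \<otimes> y = y \<otimes> x"
    using S x y gen by (intro generate_commutes[of S y x]) auto
qed

lemma (in group) carrier_subgroup_generated_eq_generate:
  assumes "S \<subseteq> carrier G"
  shows "carrier (subgroup_generated G S) = generate (subgroup_generated G S) S"
proof -
  have "S \<subseteq> carrier (subgroup_generated G S)"
    using assms by (rule subgroup_generated_subset_carrier_subset)
  then show ?thesis
    using carrier_subgroup_generated[of "subgroup_generated G S" S] by (simp add: Int_absorb1)
qed

lemma (in group) generate_involution:
  assumes "a \<in> carrier G" "a \<otimes> a = \<one>"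
  shows "generate G {a} = {\<one>, a}"
proof
  show "{\<one>, a} \<subseteq> generate G {a}"
    by (auto intro: generate.one generate.incl)
  have "subgroup {\<one>, a} G"
    using assms inv_equality[OF assms(2) assms(1) assms(1)] by (intro subgroup.intro) auto
  then show "generate G {a} \<subseteq> {\<one>, a}"
    by (intro generate_subgroup_incl) auto
qed

lemma (in group) int_pow_mod_ord:
  assumes "y \<in> carrier G" "ord y = d"
  shows "y [^] (k::int) = y [^] (k mod int d)"
  using assms mod_eq_dvd_iff[of "k mod int d" "int d" k] by (simp add: int_pow_eq)

lemma (in group) ord_eq_2:
  assumes "a \<in> carrier G" "a \<otimes> a = \<one>" "a \<noteq> \<one>"
  shows "ord a = 2"
proof -
  have "ord a dvd 2"
    using assms by (simp add: pow_eq_id [symmetric] numeral_2_eq_2)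
  moreover have "ord a \<noteq> 1"
    using assms ord_eq_1 by simp
  ultimately show ?thesis
    using dvd_imp_le[of "ord a" 2] by (cases "ord a = 0") auto
qed

lemma (in group) ord_eq_4:
  assumes "x \<in> carrier G" "x \<otimes> x \<noteq> \<one>" "(x \<otimes> x) \<otimes> (x \<otimes> x) = \<one>"
  shows "ord x = 4"
proof -
  have "x [^] (2::nat) = x \<otimes> x" "x [^] (4::nat) = (x \<otimes> x) \<otimes> (x \<otimes> x)"
    using assms(1) by (simp_all add: numeral_eq_Suc m_assoc)
  then have "ord x dvd 4" "\<not> ord x dvd 2"
    using assms by (simp_all flip: pow_eq_id)
  moreover have "ord x \<in> {1, 2, 3, 4}"
    using dvd_imp_le[OF \<open>ord x dvd 4\<close>] \<open>ord x dvd 4\<close> by (cases "ord x = 0") auto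
  ultimately show ?thesis
    by auto
qed

section \<open>Internal direct products of subgroups of order two\<close>

lemma subgroups_prod_Nil [simp]: "subgroups_prod G [] = {\<one>\<^bsub>G\<^esub>}"
  by (simp add: subgroups_prod_def)

lemma subgroups_prod_Cons [simp]: "subgroups_prod G (H # Hs) = H <#>\<^bsub>G\<^esub> subgroups_prod G Hs"
  by (simp add: subgroups_prod_def)

lemma (in comm_group) subgroup_subgroups_prod:
  "\<forall>H\<in>set Hs. subgroup H G \<Longrightarrow> subgroup (subgroups_prod G Hs) G"
  by (induction Hs) (simp_all add: triv_subgroup mult_subgroups)

lemma (in comm_group) subgroups_prod_mem:
  assumes "\<forall>H\<in>set Hs. subgroup H G" "H \<in> set Hs" "x \<in> H"
  shows "x \<in> subgroups_prod G Hs"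
  using assms
proof (induction Hs)
  case (Cons K Hs)
  have K: "subgroup K G" and P: "subgroup (subgroups_prod G Hs) G"
    using Cons.prems(1) subgroup_subgroups_prod by auto
  have "subgroup H G"
    using Cons.prems(1,2) by blast
  then have x: "x \<in> carrier G"
    using Cons.prems(3) by (rule subgroup.mem_carrier)
  show ?case
  proof (cases "H = K")
    case True
    then have "x \<otimes> \<one> \<in> K <#> subgroups_prod G Hs"
      unfolding set_mult_def using Cons.prems(3) subgroup.one_closed[OF P] by blast
    then show ?thesis
      using x by simp
  next
    case False
    then have "x \<in> subgroups_prod G Hs"
      using Cons by simp
    then have "\<one> \<otimes> x \<in> K <#> subgroups_prod G Hs"
      unfolding set_mult_def using subgroup.one_closed[OF K] by blast
    then show ?thesis
      using x by simp
  qed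
qed simp

lemma (in comm_group) subgroups_prod_eq_carrier:
  assumes "\<forall>H\<in>set Hs. subgroup H G" "carrier G = generate G S" "S \<subseteq> \<Union>(set Hs)"
  shows "subgroups_prod G Hs = carrier G"
proof
  have P: "subgroup (subgroups_prod G Hs) G"
    by (rule subgroup_subgroups_prod) fact
  then show "subgroups_prod G Hs \<subseteq> carrier G"
    by (rule subgroup.subset)
  show "carrier G \<subseteq> subgroups_prod G Hs"
    unfolding assms(2) using assms(1,3) P
    by (intro generate_subgroup_incl) (blast intro: subgroups_prod_mem)+
qed

lemma (in monoid) set_mult_one_right: "A \<subseteq> carrier G \<Longrightarrow> A <#> {\<one>} = A"
  unfolding set_mult_def by force

lemma (in monoid) set_mult_pair:
  "a \<in> carrier G \<Longrightarrow> b \<in> carrier G \<Longrightarrow> {\<one>, a} <#> {\<one>, b} = {\<one>, a, b, a \<otimes> b}"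
  unfolding set_mult_def by auto

lemma (in comm_group) internal_direct_product_involution_pair:
  assumes carr: "a \<in> carrier G" "b \<in> carrier G" and invol: "a \<otimes> a = \<one>" "b \<otimes> b = \<one>"
    and "a \<noteq> b" and gen: "carrier G = generate G {a, b}"
  shows "internal_direct_product G [generate G {a}, generate G {b}]"
  unfolding internal_direct_product_def
proof (intro conjI allI impI ballI)
  have cyc: "generate G {a} = {\<one>, a}" "generate G {b} = {\<one>, b}"
    using carr invol by (simp_all add: generate_involution)
  fix i assume "i < length [generate G {a}, generate G {b}]"
  then consider "i = 0" | "i = 1" by fastforce
  then show "[generate G {a}, generate G {b}] ! i \<inter>
      subgroups_prod G (take i [generate G {a}, generate G {b}] @
        drop (Suc i) [generate G {a}, generate G {b}]) = {\<one>}"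
    by cases (use carr \<open>a \<noteq> b\<close> in \<open>auto simp: cyc set_mult_one_right\<close>)
next
  fix H assume "H \<in> set [generate G {a}, generate G {b}]"
  then show "H \<lhd> G"
    using carr by (auto intro: subgroup_imp_normal generate_is_subgroup)
next
  show "subgroups_prod G [generate G {a}, generate G {b}] = carrier G"
    using carr gen by (intro subgroups_prod_eq_carrier[of _ "{a, b}"])
      (auto intro: generate_is_subgroup generate.incl)
qed


lemma (in comm_group) internal_direct_product_involution_triple:
  assumes carr: "a \<in> carrier G" "b \<in> carrier G" "c \<in> carrier G"
    and invol: "a \<otimes> a = \<one>" "b \<otimes> b = \<one>" "c \<otimes> c = \<one>"
    and neq: "a \<noteq> b" "a \<noteq> c" "b \<noteq> c" "c \<noteq> a \<otimes> b"
    and gen: "carrier G = generate G {a, b, c}"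
  shows "internal_direct_product G [generate G {a}, generate G {b}, generate G {c}]"
  unfolding internal_direct_product_def
proof (intro conjI allI impI ballI)
  fix H assume "H \<in> set [generate G {a}, generate G {b}, generate G {c}]"
  then show "H \<lhd> G"
    using carr by (auto intro: subgroup_imp_normal generate_is_subgroup)
next
  show "subgroups_prod G [generate G {a}, generate G {b}, generate G {c}] = carrier G"
    using carr gen by (intro subgroups_prod_eq_carrier[of _ "{a, b, c}"])
      (auto intro: generate_is_subgroup generate.incl)
next
  let ?Hs = "[generate G {a}, generate G {b}, generate G {c}]"
  have cyc: "generate G {a} = {\<one>, a}" "generate G {b} = {\<one>, b}" "generate G {c} = {\<one>, c}"
    using carr invol by (simp_all add: generate_involution)
  have prod2: "{\<one>, x} <#> ({\<one>, y} <#> {\<one>}) = {\<one>, x, y, x \<otimes> y}"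
    if "x \<in> carrier G" "y \<in> carrier G" for x y
    using that by (simp add: set_mult_one_right set_mult_pair)
  have bc: "a \<noteq> b \<otimes> c"
  proof
    assume "a = b \<otimes> c"
    then have "a \<otimes> b = c \<otimes> (b \<otimes> b)"
      using carr by (simp add: m_ac)
    then show False
      using carr invol neq by simp
  qed
  have ac: "b \<noteq> a \<otimes> c"
  proof
    assume "b = a \<otimes> c"
    then have "a \<otimes> b = (a \<otimes> a) \<otimes> c"
      using carr by (simp add: m_ac)
    then show False
      using carr invol neq by simp
  qed
  fix i assume "i < length ?Hs"
  then consider "i = 0" | "i = 1" | "i = 2" by fastforce
  then show "?Hs ! i \<inter> subgroups_prod G (take i ?Hs @ drop (Suc i) ?Hs) = {\<one>}"
    by cases (use carr neq bc ac in \<open>auto simp: cyc prod2\<close>)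
qed

section \<open>A presentation of the dihedral group of order 8\<close>

lemma is_iso_if_bij_hom_from:
  assumes hom: "\<phi> \<in> hom H G" and bij: "bij_betw \<phi> (carrier H) (carrier G)"
    and closed: "\<And>p q. p \<in> carrier H \<Longrightarrow> q \<in> carrier H \<Longrightarrow> p \<otimes>\<^bsub>H\<^esub> q \<in> carrier H"
  shows "G \<cong> H"
proof -
  let ?\<psi> = "inv_into (carrier H) \<phi>"
  have inj: "inj_on \<phi> (carrier H)" and surj: "\<phi> ` carrier H = carrier G"
    using bij by (simp_all add: bij_betw_def)
  have \<psi>: "?\<psi> u \<in> carrier H" "\<phi> (?\<psi> u) = u" if "u \<in> carrier G" for u
    using that surj by (auto intro: inv_into_into f_inv_into_f)
  have "?\<psi> \<in> iso G H"
  proof (rule isoI)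
    show "bij_betw ?\<psi> (carrier G) (carrier H)"
      using bij by (rule bij_betw_inv_into)
    show "?\<psi> \<in> hom G H"
    proof (rule homI)
      fix u v assume "u \<in> carrier G" "v \<in> carrier G"
      then have "u \<otimes>\<^bsub>G\<^esub> v = \<phi> (?\<psi> u \<otimes>\<^bsub>H\<^esub> ?\<psi> v)"
        using hom \<psi> by (simp add: hom_mult)
      then show "?\<psi> (u \<otimes>\<^bsub>G\<^esub> v) = ?\<psi> u \<otimes>\<^bsub>H\<^esub> ?\<psi> v"
        using inv_into_f_f[OF inj] closed \<psi> \<open>u \<in> carrier G\<close> \<open>v \<in> carrier G\<close> by simp
    qed (use \<psi> in blast)
  qed
  then show ?thesis
    by (rule is_isoI)
qed

lemma d8_mult_closed: "d8_mult p q \<in> carrier dihedral8"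
  by (auto simp: d8_mult_def dihedral8_def)

lemma dihedral8_mult [simp]: "p \<otimes>\<^bsub>dihedral8\<^esub> q = d8_mult p q"
  by (simp add: dihedral8_def)

locale dihedral8_generators = group G for G (structure) +
  fixes x h
  assumes x_closed [simp]: "x \<in> carrier G" and h_closed [simp]: "h \<in> carrier G"
    and ord_x: "ord x = 4" and h_invol: "h \<otimes> h = \<one>" and h_x: "h \<otimes> x = inv x \<otimes> h"
    and h_not_power: "h \<notin> {\<one>, x, x \<otimes> x, x \<otimes> x \<otimes> x}"
    and generated: "carrier G = generate G {x, h}"
begin

definition d8_elem :: "int \<times> int \<Rightarrow> 'a" where
  "d8_elem p = x [^] fst p \<otimes> h [^] snd p"

lemma ord_h: "ord h = 2"
  using h_invol h_not_power by (intro ord_eq_2) auto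

lemma inv_h: "inv h = h"
  using h_invol by (intro inv_equality) auto

lemma h_conj_x: "h \<otimes> x \<otimes> inv h = inv x"
  using h_invol by (simp add: inv_h h_x m_assoc)

lemma x_int_pow_cases: "x [^] (k::int) \<in> {\<one>, x, x \<otimes> x, x \<otimes> x \<otimes> x}"
proof -
  define m where "m = nat (k mod 4)"
  have "x [^] k = x [^] m"
    using int_pow_mod_ord[OF x_closed ord_x, of k] by (simp add: m_def int_pow_int [symmetric])
  moreover have "m = 0 \<or> m = 1 \<or> m = 2 \<or> m = 3"
    unfolding m_def by linarith
  ultimately show ?thesis
    by (auto simp: numeral_eq_Suc)
qed

lemma h_nat_pow_x: "h \<otimes> x [^] (n::nat) = inv x [^] n \<otimes> h"
proof (induction n)
  case (Suc n)
  have "h \<otimes> x [^] Suc n = (h \<otimes> x [^] n) \<otimes> x"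
    by (simp add: m_assoc)
  also have "\<dots> = inv x [^] n \<otimes> (h \<otimes> x)"
    by (simp add: Suc m_assoc)
  also have "\<dots> = inv x [^] Suc n \<otimes> h"
    by (simp add: h_x m_assoc)
  finally show ?case .
qed simp

lemma h_pow_x_pow:
  fixes s b :: int
  assumes "s \<in> {0, 1}" "b \<ge> 0"
  shows "h [^] s \<otimes> x [^] b = x [^] ((-1) ^ nat s * b) \<otimes> h [^] s"
proof (cases "s = 0")
  case False
  then have "s = 1" using assms(1) by simp
  moreover have "b = int (nat b)"
    using assms(2) by simp
  then have "x [^] b = x [^] nat b" "x [^] (- b) = inv x [^] nat b"
    by (metis int_pow_int, metis int_pow_neg_int nat_pow_inv x_closed)
  ultimately show ?thesis
    by (simp add: h_nat_pow_x)
qed simp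

lemma d8_elem_mult:
  assumes "p \<in> carrier dihedral8" "q \<in> carrier dihedral8"
  shows "d8_elem (d8_mult p q) = d8_elem p \<otimes> d8_elem q"
proof -
  obtain a s b t where p: "p = (a, s)" and q: "q = (b, t)"
    by fastforce
  then have range: "s \<in> {0, 1}" "b \<ge> 0"
    using assms by (auto simp: dihedral8_def)
  let ?e = "a + (-1) ^ nat s * b"
  have "d8_elem p \<otimes> d8_elem q = x [^] a \<otimes> (h [^] s \<otimes> x [^] b) \<otimes> h [^] t"
    by (simp add: d8_elem_def p q m_assoc)
  also have "\<dots> = x [^] ?e \<otimes> h [^] (s + t)"
    using range by (simp add: h_pow_x_pow int_pow_mult m_assoc)
  also have "\<dots> = x [^] (?e mod 4) \<otimes> h [^] ((s + t) mod 2)"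
    using int_pow_mod_ord[OF x_closed ord_x, of ?e] int_pow_mod_ord[OF h_closed ord_h, of "s + t"]
    by simp
  also have "\<dots> = d8_elem (d8_mult p q)"
    by (simp add: d8_elem_def d8_mult_def p q)
  finally show ?thesis ..
qed

lemma d8_elem_inj: "inj_on d8_elem (carrier dihedral8)"
proof (rule inj_onI)
  fix p q assume "p \<in> carrier dihedral8" "q \<in> carrier dihedral8" and eq: "d8_elem p = d8_elem q"
  then obtain a s b t where p: "p = (a, s)" and q: "q = (b, t)"
    and range: "a \<in> {0..3}" "b \<in> {0..3}" "s \<in> {0..1}" "t \<in> {0..1}"
    by (auto simp: dihedral8_def)
  have xa: "x [^] a = x [^] b \<otimes> h [^] t \<otimes> inv (h [^] s)"
    using eq by (simp add: d8_elem_def p q inv_solve_right)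
  have "x [^] (a - b) = x [^] (- b + a)"
    by simp
  also have "\<dots> = inv (x [^] b) \<otimes> x [^] a"
    by (simp only: int_pow_mult [OF x_closed] int_pow_neg [OF x_closed])
  also have "\<dots> = h [^] t \<otimes> inv (h [^] s)"
    using xa by (simp flip: m_assoc)
  also have "\<dots> = h [^] (t - s)"
    by (simp add: int_pow_diff)
  finally have xh: "x [^] (a - b) = h [^] (t - s)" .
  have "s = t"
  proof (rule ccontr)
    assume "s \<noteq> t"
    then have "(t - s) mod 2 = 1"
      using range by (simp add: atLeastAtMost_iff) presburger
    then have "h = x [^] (a - b)"
      using xh int_pow_mod_ord[OF h_closed ord_h, of "t - s"] by simp
    then show False
      using h_not_power x_int_pow_cases by metis
  qed
  then have "int (ord x) dvd (a - b)"
    using xh by (simp flip: int_pow_eq_id)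
  then have "a = b"
    using range by (simp add: ord_x atLeastAtMost_iff) presburger
  with \<open>s = t\<close> show "p = q"
    by (simp add: p q)
qed

lemma d8_elem_image: "d8_elem ` carrier dihedral8 = carrier G"
proof
  show "d8_elem ` carrier dihedral8 \<subseteq> carrier G"
    by (auto simp: d8_elem_def)
  have "inv x = x [^] (-1 :: int)"
    by (simp add: int_pow_neg)
  then have "d8_elem (3, 0) = inv x"
    using int_pow_mod_ord[OF x_closed ord_x, of "-1"] by (simp add: d8_elem_def)
  moreover note inv_h
  moreover have "d8_elem (0, 0) = \<one>" "d8_elem (1, 0) = x" "d8_elem (0, 1) = h"
    by (simp_all add: d8_elem_def)
  moreover have "(0, 0) \<in> carrier dihedral8" "(1, 0) \<in> carrier dihedral8"
    "(0, 1) \<in> carrier dihedral8" "(3, 0) \<in> carrier dihedral8"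
    by (simp_all add: dihedral8_def)
  ultimately have gens: "\<one> \<in> d8_elem ` carrier dihedral8" "x \<in> d8_elem ` carrier dihedral8"
    "h \<in> d8_elem ` carrier dihedral8" "inv x \<in> d8_elem ` carrier dihedral8"
    "inv h \<in> d8_elem ` carrier dihedral8"
    by (metis image_eqI)+
  have "g \<in> d8_elem ` carrier dihedral8" if "g \<in> generate G {x, h}" for g
    using that
  proof induction
    case (eng u v)
    then obtain p q where "p \<in> carrier dihedral8" "q \<in> carrier dihedral8"
      and "u = d8_elem p" "v = d8_elem q"
      by blast
    then have "u \<otimes> v = d8_elem (d8_mult p q)"
      by (simp add: d8_elem_mult)
    then show ?case
      using d8_mult_closed by blast
  qed (use gens in blast)+
  then show "carrier G \<subseteq> d8_elem ` carrier dihedral8"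
    by (auto simp: generated)
qed

theorem is_iso_dihedral8: "G \<cong> dihedral8"
proof (rule is_iso_if_bij_hom_from)
  show "d8_elem \<in> hom dihedral8 G"
  proof (rule homI)
    show "d8_elem p \<in> carrier G" if "p \<in> carrier dihedral8" for p
      using that d8_elem_image by blast
  qed (simp add: d8_elem_mult)
  show "bij_betw d8_elem (carrier dihedral8) (carrier G)"
    by (simp add: bij_betw_def d8_elem_inj d8_elem_image)
qed (simp add: d8_mult_closed)

end

lemma (in group) dihedral8_generatorsI:
  assumes x: "x \<in> carrier G" and h: "h \<in> carrier G"
    and "x \<otimes> x \<noteq> \<one>" and x4: "(x \<otimes> x) \<otimes> (x \<otimes> x) = \<one>" and "h \<otimes> h = \<one>"
    and h_x: "h \<otimes> x = x \<otimes> x \<otimes> x \<otimes> h" and "h \<notin> {\<one>, x, x \<otimes> x, x \<otimes> x \<otimes> x}"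
    and "carrier G = generate G {x, h}"
  shows "dihedral8_generators G x h"
proof
  show "ord x = 4"
    using assms by (intro ord_eq_4)
  have "inv x = x \<otimes> x \<otimes> x"
    using x x4 by (intro inv_equality) (simp_all add: m_assoc)
  then show "h \<otimes> x = inv x \<otimes> h"
    by (simp add: h_x)
qed (use assms in auto)

section \<open>The group \<open>G\<^sub>\<ell>\<close>\<close>

lemma restrict_involution_in_Bij:
  assumes "\<And>f. f \<in> S \<Longrightarrow> g f \<in> S" "\<And>f. f \<in> S \<Longrightarrow> g (g f) = f"
  shows "restrict g S \<in> Bij S"
  unfolding Bij_def using assms by (auto intro!: bij_betw_byWitness[where f' = g])

lemma generators_in_BijGroup: "{n_map l, h_map l, r_map l} \<subseteq> carrier (BijGroup (Pl l))"
  unfolding BijGroup_def n_map_def h_map_def r_map_def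
  by (auto intro!: restrict_involution_in_Bij simp: Pl_coeff_0)

lemma n_map_apply [simp]: "f \<in> Pl l \<Longrightarrow> n_map l f = - f"
  by (simp add: n_map_def)

lemma h_map_apply [simp]: "f \<in> Pl l \<Longrightarrow> h_map l f = tilde f"
  by (simp add: h_map_def)

lemma r_map_apply [simp]: "f \<in> Pl l \<Longrightarrow> r_map l f = dagger f"
  by (simp add: r_map_def)

lemma group_G_grp: "group (G_grp l)"
  unfolding G_grp_def by (rule group.group_subgroup_generated [OF group_BijGroup])

lemma carrier_G_grp: "carrier (G_grp l) = generate (G_grp l) {n_map l, h_map l, r_map l}"
  unfolding G_grp_def
  by (rule group.carrier_subgroup_generated_eq_generate [OF group_BijGroup generators_in_BijGroup])

lemma generators_in_G_grp [simp]:
  "n_map l \<in> carrier (G_grp l)" "h_map l \<in> carrier (G_grp l)" "r_map l \<in> carrier (G_grp l)"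
  using group.subgroup_generated_subset_carrier_subset [OF group_BijGroup generators_in_BijGroup]
  by (simp_all add: G_grp_def)

lemma G_grp_in_Bij: "t \<in> carrier (G_grp l) \<Longrightarrow> t \<in> Bij (Pl l)"
  using group.carrier_subgroup_generated_subset [OF group_BijGroup]
  by (auto simp: G_grp_def BijGroup_def)

lemma G_grp_apply_Pl [simp]: "t \<in> carrier (G_grp l) \<Longrightarrow> f \<in> Pl l \<Longrightarrow> t f \<in> Pl l"
  using G_grp_in_Bij Bij_imp_funcset by blast

lemma G_grp_mult_apply [simp]:
  assumes "u \<in> carrier (G_grp l)" "v \<in> carrier (G_grp l)" "f \<in> Pl l"
  shows "(u \<otimes>\<^bsub>G_grp l\<^esub> v) f = u (v f)"
  using assms G_grp_in_Bij [of u l] G_grp_in_Bij [of v l]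
  by (simp add: G_grp_def BijGroup_def compose_def)

lemma G_grp_one_apply [simp]: "f \<in> Pl l \<Longrightarrow> \<one>\<^bsub>G_grp l\<^esub> f = f"
  by (simp add: G_grp_def BijGroup_def)

lemma G_grp_eqI:
  assumes "u \<in> carrier (G_grp l)" "v \<in> carrier (G_grp l)" "\<And>f. f \<in> Pl l \<Longrightarrow> u f = v f"
  shows "u = v"
  using assms G_grp_in_Bij Bij_imp_extensional by (metis extensionalityI)

lemma generator_involution:
  assumes "g \<in> {n_map l, h_map l, r_map l}"
  shows "g \<otimes>\<^bsub>G_grp l\<^esub> g = \<one>\<^bsub>G_grp l\<^esub>"
proof -
  interpret group "G_grp l"
    by (rule group_G_grp)
  show ?thesis
    using assms by (auto intro!: G_grp_eqI [where l = l] simp: Pl_coeff_0)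
qed

lemma n_map_central:
  "n_map l \<otimes>\<^bsub>G_grp l\<^esub> h_map l = h_map l \<otimes>\<^bsub>G_grp l\<^esub> n_map l"
  "n_map l \<otimes>\<^bsub>G_grp l\<^esub> r_map l = r_map l \<otimes>\<^bsub>G_grp l\<^esub> n_map l"
proof -
  interpret group "G_grp l"
    by (rule group_G_grp)
  show "n_map l \<otimes>\<^bsub>G_grp l\<^esub> h_map l = h_map l \<otimes>\<^bsub>G_grp l\<^esub> n_map l"
    by (rule G_grp_eqI [where l = l]) (simp_all add: tilde_minus)
  show "n_map l \<otimes>\<^bsub>G_grp l\<^esub> r_map l = r_map l \<otimes>\<^bsub>G_grp l\<^esub> n_map l"
    by (rule G_grp_eqI [where l = l]) (simp_all add: dagger_minus)
qed

lemma tilde_dagger_Pl: "f \<in> Pl l \<Longrightarrow> tilde (dagger f) = smult ((-1) ^ (l - 1)) (dagger (tilde f))"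
  using tilde_dagger [of f] by (simp add: Pl_iff)

lemma tilde_dagger_tilde_Pl:
  assumes "f \<in> Pl l" "odd (l - 1)"
  shows "tilde (dagger (tilde f)) = - dagger f"
  using tilde_dagger_Pl [OF Pl_tilde [OF assms(1)]] assms(2) by simp

lemma h_map_commutes_r_map:
  assumes "even (l - 1)"
  shows "h_map l \<otimes>\<^bsub>G_grp l\<^esub> r_map l = r_map l \<otimes>\<^bsub>G_grp l\<^esub> h_map l"
proof -
  interpret group "G_grp l"
    by (rule group_G_grp)
  show ?thesis
    using assms by (intro G_grp_eqI [where l = l]) (simp_all add: tilde_dagger_Pl)
qed

lemma comm_group_G_grp:
  assumes "even (l - 1)"
  shows "comm_group (G_grp l)"
proof -
  interpret group "G_grp l"
    by (rule group_G_grp)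
  show ?thesis
    using n_map_central h_map_commutes_r_map [OF assms]
    by (intro comm_group_if_generators_commute [OF carrier_G_grp]) auto
qed

lemma lp_norms_G_grp_invariant:
  assumes "t \<in> carrier (G_grp l)" "f \<in> Pl l" "p \<ge> 1"
  shows "lp_norm p (t f) = lp_norm p f \<and> lp_norm p (t f * tilde (t f)) = lp_norm p (f * tilde f)"
proof -
  interpret group "G_grp l"
    by (rule group_G_grp)
  define T where "T = {t \<in> carrier (G_grp l). \<forall>f \<in> Pl l.
    lp_norm p (t f) = lp_norm p f \<and> lp_norm p (t f * tilde (t f)) = lp_norm p (f * tilde f)}"
  have "generate (G_grp l) {n_map l, h_map l, r_map l} \<subseteq> T"
  proof (rule generate_involutions_subset)
    show "{n_map l, h_map l, r_map l} \<subseteq> T"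
      using \<open>p \<ge> 1\<close> by (simp add: T_def lp_norm_minus tilde_minus lp_norm_tilde mult.commute
          lp_norm_dagger lp_norm_dagger_mult_tilde)
  qed (auto simp: T_def generator_involution)
  then show ?thesis
    using assms carrier_G_grp T_def by blast
qed

(* Natural-number subtraction makes Pl 0 = Pl 1, hence l = 0 is included. *)
lemma h_map_trivial: "l \<le> 1 \<Longrightarrow> h_map l = \<one>\<^bsub>G_grp l\<^esub>"
proof -
  assume "l \<le> 1"
  interpret group "G_grp l"
    by (rule group_G_grp)
  have "tilde f = f" if "f \<in> Pl l" for f
  proof (rule poly_eqI)
    fix k
    have "degree f = 0"
      using that \<open>l \<le> 1\<close> by (simp add: Pl_iff)
    then show "coeff (tilde f) k = coeff f k"
      by (cases "k = 0") (simp_all add: coeff_tilde coeff_eq_0)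
  qed
  then show ?thesis
    by (intro G_grp_eqI [where l = l]) simp_all
qed

lemma G_grp_length_1:
  "internal_direct_product (G_grp 1) [generate (G_grp 1) {n_map 1}, generate (G_grp 1) {r_map 1}]
   \<and> group.ord (G_grp 1) (n_map 1) = 2 \<and> group.ord (G_grp 1) (r_map 1) = 2"
proof -
  interpret comm_group "G_grp 1"
    by (rule comm_group_G_grp) simp
  have gen: "carrier (G_grp 1) = generate (G_grp 1) {n_map 1, r_map 1}"
  proof
    show "carrier (G_grp 1) \<subseteq> generate (G_grp 1) {n_map 1, r_map 1}"
      unfolding carrier_G_grp using h_map_trivial [of 1]
      by (intro generate_subgroup_incl generate_is_subgroup) (auto intro: generate.incl generate.one)
  qed (rule generate_incl, simp)
  have probe: "u \<noteq> v" if "coeff (u f) 0 \<noteq> coeff (v f) 0" for u v :: "complex poly \<Rightarrow> complex poly" and f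
    using that by auto
  have "n_map 1 \<noteq> \<one>\<^bsub>G_grp 1\<^esub>" "n_map 1 \<noteq> r_map 1"
    by (rule probe [where f = "[:1:]"], simp add: Pl_iff)+
  moreover have "r_map 1 \<noteq> \<one>\<^bsub>G_grp 1\<^esub>"
    by (rule probe [where f = "[:\<i>:]"]) (simp add: Pl_iff)
  ultimately show ?thesis
    by (intro conjI internal_direct_product_involution_pair [OF _ _ _ _ _ gen] ord_eq_2)
      (simp_all add: generator_involution)
qed

lemma G_grp_odd_length:
  assumes "odd l" "l > 1"
  shows "internal_direct_product (G_grp l)
      [generate (G_grp l) {n_map l}, generate (G_grp l) {h_map l}, generate (G_grp l) {r_map l}]
    \<and> group.ord (G_grp l) (n_map l) = 2 \<and> group.ord (G_grp l) (h_map l) = 2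
    \<and> group.ord (G_grp l) (r_map l) = 2"
proof -
  have "even (l - 1)" "l \<ge> 3"
    using assms by (auto elim: oddE)
  interpret comm_group "G_grp l"
    by (rule comm_group_G_grp) fact
  have probe: "u \<noteq> v" if "coeff (u f) k \<noteq> coeff (v f) k" for u v :: "complex poly \<Rightarrow> complex poly" and f k
    using that by auto
  \<comment> \<open>\<open>2 + z + z^(\<ell>-1)\<close>: its constant and linear coefficients separate the eight elements.\<close>
  define w :: "complex poly" where "w = [:2, 1:] + monom 1 (l - 1)"
  have "degree [:2, 1::complex:] < degree (monom (1::complex) (l - 1))"
    using \<open>l \<ge> 3\<close> by (simp add: degree_monom_eq)
  then have w: "degree w = l - 1" "coeff w 0 = 2" "coeff w 1 = 1" "coeff w (l - 1) = 1"
    using \<open>l \<ge> 3\<close> unfolding w_def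
    by (auto simp: degree_add_eq_right degree_monom_eq coeff_monom coeff_pCons split: nat.split)
  then have "w \<in> Pl l"
    by (simp add: Pl_iff)
  note eval = this w w [unfolded One_nat_def] coeff_tilde tilde_dagger_Pl \<open>even (l - 1)\<close>
  have "n_map l \<noteq> \<one>\<^bsub>G_grp l\<^esub>" "r_map l \<noteq> \<one>\<^bsub>G_grp l\<^esub>" "n_map l \<noteq> h_map l"
    "n_map l \<noteq> r_map l" "h_map l \<noteq> r_map l" "r_map l \<noteq> n_map l \<otimes>\<^bsub>G_grp l\<^esub> h_map l"
    by (rule probe [where f = w and k = 0], simp add: eval)+
  moreover have "h_map l \<noteq> \<one>\<^bsub>G_grp l\<^esub>"
    by (rule probe [where f = w and k = 1]) (simp add: eval)
  ultimately show ?thesis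
    by (intro conjI internal_direct_product_involution_triple [OF _ _ _ _ _ _ _ _ _ _ carrier_G_grp]
        ord_eq_2) (auto simp: generator_involution)
qed

lemma G_grp_even_length:
  assumes "even l" "l \<noteq> 0"
  shows "G_grp l \<cong> dihedral8
    \<and> carrier (G_grp l) = generate (G_grp l) {r_map l \<otimes>\<^bsub>G_grp l\<^esub> h_map l, h_map l}
    \<and> group.ord (G_grp l) (r_map l \<otimes>\<^bsub>G_grp l\<^esub> h_map l) = 4
    \<and> group.ord (G_grp l) (h_map l) = 2
    \<and> h_map l \<otimes>\<^bsub>G_grp l\<^esub> (r_map l \<otimes>\<^bsub>G_grp l\<^esub> h_map l) \<otimes>\<^bsub>G_grp l\<^esub> inv\<^bsub>G_grp l\<^esub> (h_map l)
        = inv\<^bsub>G_grp l\<^esub> (r_map l \<otimes>\<^bsub>G_grp l\<^esub> h_map l)"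
proof -
  interpret group "G_grp l"
    by (rule group_G_grp)
  let ?G = "G_grp l" and ?n = "n_map l" and ?h = "h_map l" and ?r = "r_map l"
  define x where "x = ?r \<otimes>\<^bsub>?G\<^esub> ?h"
  have "odd (l - 1)" "l \<ge> 2"
    using assms by (auto elim: evenE)
  then have sign: "(-1::complex) ^ (l - 1) = -1"
    by simp
  have x: "x \<in> carrier ?G"
    by (simp add: x_def)
  have hh: "?h \<otimes>\<^bsub>?G\<^esub> ?h = \<one>\<^bsub>?G\<^esub>"
    by (simp add: generator_involution)
  have xx: "x \<otimes>\<^bsub>?G\<^esub> x = ?n"
    unfolding x_def using \<open>odd (l - 1)\<close>
    by (intro G_grp_eqI [where l = l]) (simp_all add: tilde_dagger_tilde_Pl dagger_minus Pl_coeff_0)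
  have h_x: "?h \<otimes>\<^bsub>?G\<^esub> x = ?n \<otimes>\<^bsub>?G\<^esub> x \<otimes>\<^bsub>?G\<^esub> ?h"
    unfolding x_def using \<open>odd (l - 1)\<close>
    by (intro G_grp_eqI [where l = l]) (simp_all add: tilde_dagger_tilde_Pl)
  have gen: "carrier ?G = generate ?G {x, ?h}"
  proof
    have xh: "x \<otimes>\<^bsub>?G\<^esub> ?h = ?r"
      using hh by (simp add: x_def m_assoc)
    have "?n \<in> generate ?G {x, ?h}" "?r \<in> generate ?G {x, ?h}"
      unfolding xx [symmetric] xh [symmetric] by (auto intro: generate.eng generate.incl)
    then show "carrier ?G \<subseteq> generate ?G {x, ?h}"
      unfolding carrier_G_grp [of l] using x
      by (intro generate_subgroup_incl generate_is_subgroup) (auto intro: generate.incl)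
  qed (rule generate_incl, simp add: x)
  have probe: "u \<noteq> v" if "coeff (u f) k \<noteq> coeff (v f) k" for u v :: "complex poly \<Rightarrow> complex poly" and f k
    using that by auto
  \<comment> \<open>\<open>2 + z^(\<ell>-1)\<close>: its constant and leading coefficients separate \<open>h\<close> from the powers of \<open>x\<close>.\<close>
  define w :: "complex poly" where "w = [:2:] + monom 1 (l - 1)"
  have w: "degree w = l - 1" "coeff w 0 = 2" "coeff w (l - 1) = 1"
    using \<open>l \<ge> 2\<close> unfolding w_def
    by (auto simp: degree_add_eq_right degree_monom_eq coeff_monom coeff_pCons split: nat.split)
  then have "w \<in> Pl l"
    by (simp add: Pl_iff)
  note eval = this w w [unfolded One_nat_def] coeff_tilde x_def sign sign [unfolded One_nat_def]
  have "?n \<noteq> \<one>\<^bsub>?G\<^esub>" "?h \<noteq> x" "?h \<noteq> ?n" "?h \<noteq> ?n \<otimes>\<^bsub>?G\<^esub> x"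
    by (rule probe [where f = w and k = 0], simp add: eval)+
  moreover have "?h \<noteq> \<one>\<^bsub>?G\<^esub>"
    by (rule probe [where f = w and k = "l - 1"]) (simp add: eval)
  ultimately interpret dihedral8_generators ?G x ?h
    using x hh h_x xx generator_involution [of ?n l]
    by (intro dihedral8_generatorsI [OF _ _ _ _ _ _ _ gen]) (simp_all add: m_assoc)
  show ?thesis
    using is_iso_dihedral8 gen ord_x ord_h h_conj_x by (simp add: x_def)
qed

theorem proposition3p2:
  fixes l :: nat
  assumes "l \<ge> 1"
  shows
    "{n_map l, h_map l, r_map l} \<subseteq> carrier (BijGroup (Pl l))
     \<and> group (G_grp l)
     \<and> (l = 1 \<longrightarrow>
          internal_direct_product (G_grp l)
            [generate (G_grp l) {n_map l}, generate (G_grp l) {r_map l}]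
          \<and> group.ord (G_grp l) (n_map l) = 2 \<and> group.ord (G_grp l) (r_map l) = 2)
     \<and> (odd l \<and> l > 1 \<longrightarrow>
          internal_direct_product (G_grp l)
            [generate (G_grp l) {n_map l}, generate (G_grp l) {h_map l},
             generate (G_grp l) {r_map l}]
          \<and> group.ord (G_grp l) (n_map l) = 2 \<and> group.ord (G_grp l) (h_map l) = 2
          \<and> group.ord (G_grp l) (r_map l) = 2)
     \<and> (even l \<longrightarrow>
          G_grp l \<cong> dihedral8
          \<and> carrier (G_grp l) = generate (G_grp l) {r_map l \<otimes>\<^bsub>G_grp l\<^esub> h_map l, h_map l}
          \<and> group.ord (G_grp l) (r_map l \<otimes>\<^bsub>G_grp l\<^esub> h_map l) = 4
          \<and> group.ord (G_grp l) (h_map l) = 2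
          \<and> h_map l \<otimes>\<^bsub>G_grp l\<^esub> (r_map l \<otimes>\<^bsub>G_grp l\<^esub> h_map l) \<otimes>\<^bsub>G_grp l\<^esub> inv\<^bsub>G_grp l\<^esub> (h_map l)
              = inv\<^bsub>G_grp l\<^esub> (r_map l \<otimes>\<^bsub>G_grp l\<^esub> h_map l))
     \<and> (\<forall>t \<in> carrier (G_grp l). \<forall>f \<in> Pl l. \<forall>p::real. p \<ge> 1 \<longrightarrow>
          lp_norm p (t f) = lp_norm p f
          \<and> lp_norm p (t f * tilde (t f)) = lp_norm p (f * tilde f))"
proof (intro conjI impI ballI allI)
  assume "l = 1"
  then show "internal_direct_product (G_grp l)
      [generate (G_grp l) {n_map l}, generate (G_grp l) {r_map l}]"
    "group.ord (G_grp l) (n_map l) = 2" "group.ord (G_grp l) (r_map l) = 2"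
    using G_grp_length_1 by simp_all
qed (use assms generators_in_BijGroup in \<open>simp_all add: group_G_grp G_grp_odd_length
      G_grp_even_length lp_norms_G_grp_invariant\<close>)

end
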